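(* Let $n=p_1^{m_1}\cdots p_k^{m_k}$. The Laplacian spectrum of $\mathcal E_{\mathbb Z_n}(\mathscr U)$ consists of $N_I$ with multiplicity $\prod_{i\notin\Xi_I}m_i-1$ for each $I\in V(\mathscr G)$ with $|[I]|>1$, together with the eigenvalues of the vertex-weighted Laplacian matrix $\mathbf L(\mathscr G)$.
   Context: Primes $p_1<\dots<p_k$, positive integers $m_i$, $n$ not prime. Nonzero proper ideals of $\mathbb Z_n$ are uniquely $\langle p_1^{r_1}\cdots p_k^{r_k}\rangle$, $0\le r_i\le m_i$, $(r_i)\ne(0,\dots,0),(m_1,\dots,m_k)$; essential iff $r_j\ne m_j$ for all $j$. Essential ideal graph $\mathcal E_{\mathbb Z_n}$: vertices nonzero proper ideals, distinct $I,K$ adjacent iff $I+K$ essential. $\mathscr U$ = nonzero proper nonessential ideals, $\mathcal E_{\mathbb Z_n}(\mathscr U)$ the induced subgraph; $\Xi_I=\{i:r_i=m_i\}$, $[I]=\{J\in\mathscr U:\Xi_J=\Xi_I\}$. $\mathscr G$: vertex set the $2^k-2$ ideals $\langle\prod_{i\in S}p_i^{m_i}\rangle$, $S$ nonempty proper subset of $\{1,\dots,k\}$, $I\sim J$ iff $\Xi_I\cap\Xi_J=\emptyset$. $n_I=|[I]|=\prod_{i\notin\Xi_I}m_i$, $N_I=\sum_{J\sim I}n_J$. $\mathbf L(\mathscr G)$: matrix indexed by $V(\mathscr G)$ with diagonal entries $N_I$, $(I,J)$-entry $-n_J$ if $I\ne J$, $I\sim J$, and $0$ otherwise. *)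

theory Defs
  imports "HOL-Computational_Algebra.Computational_Algebra" "Jordan_Normal_Form.Char_Poly"
begin

text \<open>Ideals of Z_n are modelled by their canonical generators: the ideal generated by
  a positive divisor d of n.  This is a bijection between positive divisors of n and
  ideals of Z_n; the zero ideal corresponds to d = n, the whole ring to d = 1.
  Under it, the sum of ideals is the ideal of gcd d e and the intersection is the
  ideal of lcm d e.\<close>

definition nzp_ideals :: "nat \<Rightarrow> nat set" where
  "nzp_ideals n = {d. d dvd n \<and> d \<noteq> 1 \<and> d \<noteq> n}"

text \<open>Essential ideal: meets every nonzero ideal nontrivially
  (the ideal of d meets the ideal of e in the ideal of lcm d e).\<close>
definition essential_ideal :: "nat \<Rightarrow> nat \<Rightarrow> bool" where
  "essential_ideal n d \<longleftrightarrow> (\<forall>e. e dvd n \<and> e \<noteq> n \<longrightarrow> lcm d e \<noteq> n)"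

definition ess_adj :: "nat \<Rightarrow> nat \<Rightarrow> nat \<Rightarrow> bool" where
  "ess_adj n d e \<longleftrightarrow> d \<noteq> e \<and> essential_ideal n (gcd d e)"

definition noness_ideals :: "nat \<Rightarrow> nat set" where
  "noness_ideals n = {d \<in> nzp_ideals n. \<not> essential_ideal n d}"

definition Xi :: "nat \<Rightarrow> nat \<Rightarrow> nat set" where
  "Xi n d = {p \<in> prime_factors n. multiplicity p d = multiplicity p n}"

definition ideal_class :: "nat \<Rightarrow> nat \<Rightarrow> nat set" where
  "ideal_class n d = {e \<in> noness_ideals n. Xi n e = Xi n d}"

definition class_size :: "nat \<Rightarrow> nat \<Rightarrow> nat" where
  "class_size n d = card (ideal_class n d)"

definition G_vertices :: "nat \<Rightarrow> nat set" where
  "G_vertices n = {(\<Prod>p\<in>S. p ^ multiplicity p n) | S.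
                     S \<subseteq> prime_factors n \<and> S \<noteq> {} \<and> S \<noteq> prime_factors n}"

definition G_adj :: "nat \<Rightarrow> nat \<Rightarrow> nat \<Rightarrow> bool" where
  "G_adj n d e \<longleftrightarrow> Xi n d \<inter> Xi n e = {}"

definition N_weight :: "nat \<Rightarrow> nat \<Rightarrow> nat" where
  "N_weight n d = (\<Sum>e\<in>{e \<in> G_vertices n. G_adj n d e}. class_size n e)"

definition set_mat :: "nat set \<Rightarrow> (nat \<Rightarrow> nat \<Rightarrow> 'a) \<Rightarrow> 'a mat" where
  "set_mat V f = mat (card V) (card V)
     (\<lambda>(i, j). f (sorted_list_of_set V ! i) (sorted_list_of_set V ! j))"

definition laplacian :: "nat set \<Rightarrow> (nat \<Rightarrow> nat \<Rightarrow> bool) \<Rightarrow> complex mat" where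
  "laplacian V adj = set_mat V (\<lambda>i j.
      if i = j then of_nat (card {k \<in> V. adj i k})
      else if adj i j then -1 else 0)"

definition weighted_laplacian_G :: "nat \<Rightarrow> complex mat" where
  "weighted_laplacian_G n = set_mat (G_vertices n) (\<lambda>i j.
      if i = j then of_nat (N_weight n i)
      else if G_adj n i j then - of_nat (class_size n j) else 0)"

definition spectrum_mset :: "complex mat \<Rightarrow> complex multiset" where
  "spectrum_mset A = proots (char_poly A)"

end

(*
  I ~ J in the essential ideal graph on U iff Xi_I and Xi_J are disjoint, so adjacency only
  depends on the classes [I]: the graph is a blow-up of G in which every class is an
  independent set and two classes are either completely joined or not joined at all.
  Its Laplacian maps the indicator vector of a class to a combination of class indicators,
  with the coefficients of the vertex-weighted Laplacian L(G), and maps the unit vector at a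
  vertex of [I] to N_I times itself plus a combination of class indicators.  So, in the basis
  of class indicators and unit vectors at all but one member of each class, it becomes block
  upper triangular with diagonal blocks L(G) and a diagonal matrix carrying N_I exactly
  |[I]| - 1 times.  The class sizes come from counting exponent vectors of divisors of n.
*)
theory Submission
  imports Defs
begin

section \<open>Laplacian spectrum of a blow-up of a graph\<close>

lemma index_mult_mat_sum:
  assumes "i < dim_row A" "j < dim_col B" "dim_col A = dim_row B"
  shows "(A * B) $$ (i, j) = (\<Sum>l<dim_col A. A $$ (i, l) * B $$ (l, j))"
  using assms by (auto simp: scalar_prod_def intro!: sum.cong)

lemma char_poly_nonzero: "A \<in> carrier_mat n n \<Longrightarrow> char_poly A \<noteq> 0"
  using degree_monic_char_poly[of A n] by auto

lemma proots_char_poly_mat_diag: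
  fixes f :: "nat \<Rightarrow> 'a :: idom"
  shows "proots (char_poly (mat_diag n f)) = mset (map f [0..<n])"
proof -
  have linear_factors: "proots (\<Prod>a\<leftarrow>xs. [:- a, 1:]) = mset xs" for xs :: "'a list"
  proof (induction xs)
    case (Cons a xs)
    have "(\<Prod>a\<leftarrow>xs. [:- a, 1:]) \<noteq> 0"
      by (auto simp: prod_list_zero_iff)
    then show ?case
      using Cons.IH by (simp add: proots_mult del: mult_pCons_left)
  qed simp
  have "upper_triangular (mat_diag n f)"
    by (simp add: upper_triangular_def mat_diag_def)
  then have "char_poly (mat_diag n f) = (\<Prod>a\<leftarrow>diag_mat (mat_diag n f). [:- a, 1:])"
    by (simp add: char_poly_upper_triangular[of _ n])
  also have "diag_mat (mat_diag n f) = map f [0..<n]"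
    by (simp add: diag_mat_def mat_diag_def)
  finally show ?thesis
    by (simp only: linear_factors)
qed

lemma char_poly_four_block_zero:
  fixes A :: "'a :: idom mat"
  assumes A: "A \<in> carrier_mat n n" and B: "B \<in> carrier_mat n k" and D: "D \<in> carrier_mat k k"
  shows "char_poly (four_block_mat A B (0\<^sub>m k n) D) = char_poly A * char_poly D"
proof -
  let ?cm = "\<lambda>A. [:0, 1:] \<cdot>\<^sub>m 1\<^sub>m (dim_row A) + map_mat (\<lambda>a. [:- a:]) A"
  have "?cm (four_block_mat A B (0\<^sub>m k n) D) =
      four_block_mat (?cm A) (map_mat (\<lambda>a. [:- a:]) B) (0\<^sub>m k n) (?cm D)"
    using A B D by (intro eq_matI) (auto simp: one_poly_def)
  also have "det \<dots> = det (?cm A) * det (?cm D)"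
    using A B D by (intro det_four_block_mat_lower_left_zero[OF _ _ refl]) auto
  finally show ?thesis
    unfolding char_poly_defs .
qed

lemma similar_mat_if_intertwined:
  fixes A B P :: "'a :: field mat"
  assumes A: "A \<in> carrier_mat n n" and B: "B \<in> carrier_mat n n" and P: "P \<in> carrier_mat n n"
    and "det P \<noteq> 0" and AP: "A * P = P * B"
  shows "similar_mat A B"
proof -
  obtain Q where Q: "Q \<in> carrier_mat n n" "Q * P = 1\<^sub>m n" "P * Q = 1\<^sub>m n"
    using det_non_zero_imp_unit[OF P \<open>det P \<noteq> 0\<close>, of "()"]
    by (auto simp: Units_def ring_mat_def)
  have "A = A * (P * Q)"
    using A Q by simp
  also have "\<dots> = A * P * Q"
    using A P Q by (simp add: assoc_mult_mat)
  also have "\<dots> = P * B * Q"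
    by (simp add: AP)
  finally show ?thesis
    using A B P Q by (intro similar_matI[of A B P Q n]) auto
qed

lemma image_mset_mset_set_fibres:
  fixes f :: "'a \<Rightarrow> 'b" and g :: "'b \<Rightarrow> 'c"
  assumes "finite X" "finite T" "f ` X \<subseteq> T"
  shows "image_mset (\<lambda>x. g (f x)) (mset_set X) =
    (\<Sum>t\<in>T. replicate_mset (card {x \<in> X. f x = t}) (g t))"
proof -
  have const: "(\<Sum>x\<in>Y. {#y#}) = replicate_mset (card Y) y" for Y :: "'a set" and y :: 'c
    by (induction Y rule: infinite_finite_induct) auto
  have "image_mset (\<lambda>x. g (f x)) (mset_set X) = (\<Sum>x\<in>X. {#g (f x)#})"
    using assms(1) by (induction X rule: finite_induct) auto
  also have "\<dots> = (\<Sum>t\<in>T. \<Sum>x\<in>{x \<in> X. f x = t}. {#g (f x)#})"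
    using assms by (intro sum.group[symmetric]) auto
  also have "\<dots> = (\<Sum>t\<in>T. replicate_mset (card {x \<in> X. f x = t}) (g t))"
    by (intro sum.cong refl) (simp add: const)
  finally show ?thesis .
qed

locale class_blowup =
  fixes m K :: nat and c :: "nat \<Rightarrow> nat" and A :: "nat \<Rightarrow> nat \<Rightarrow> bool"
    and N :: "nat \<Rightarrow> 'a :: field"
  assumes class_less: "i < m \<Longrightarrow> c i < K"
    and class_surj: "s < K \<Longrightarrow> \<exists>i<m. c i = s"
    and class_adj_irrefl: "s < K \<Longrightarrow> \<not> A s s"
begin

definition fibre_card :: "nat \<Rightarrow> nat" where
  "fibre_card s = card {i. i < m \<and> c i = s}"

definition rep :: "nat \<Rightarrow> nat" where
  "rep s = (LEAST i. i < m \<and> c i = s)"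

definition nonreps :: "nat list" where
  "nonreps = filter (\<lambda>i. rep (c i) \<noteq> i) [0..<m]"

definition blowup_mat :: "'a mat" where
  "blowup_mat = mat m m (\<lambda>(i, j). if i = j then N (c i) else if A (c i) (c j) then -1 else 0)"

definition quotient_mat :: "'a mat" where
  "quotient_mat = mat K K (\<lambda>(s, t). if s = t then N s else if A s t then - of_nat (fibre_card t) else 0)"

definition basis_mat :: "'a mat" where
  "basis_mat = mat m m (\<lambda>(i, j). if j < K then (if c i = j then 1 else 0)
     else if i = nonreps ! (j - K) then 1 else 0)"

definition block_mat :: "'a mat" where
  "block_mat = four_block_mat quotient_mat
     (mat K (length nonreps) (\<lambda>(t, a). if A t (c (nonreps ! a)) then -1 else 0))
     (0\<^sub>m (length nonreps) K)
     (mat_diag (length nonreps) (\<lambda>a. N (c (nonreps ! a))))"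

lemma rep_less: "s < K \<Longrightarrow> rep s < m"
  and class_rep: "s < K \<Longrightarrow> c (rep s) = s"
  using LeastI_ex[of "\<lambda>i. i < m \<and> c i = s"] class_surj[of s] by (auto simp: rep_def)

lemma set_nonreps: "set nonreps = {i. i < m \<and> rep (c i) \<noteq> i}"
  by (auto simp: nonreps_def)

lemma distinct_nonreps: "distinct nonreps"
  by (simp add: nonreps_def)

lemma nonreps_nth_less: "a < length nonreps \<Longrightarrow> nonreps ! a < m"
  and nonreps_nth_not_rep: "a < length nonreps \<Longrightarrow> rep (c (nonreps ! a)) \<noteq> nonreps ! a"
  using nth_mem[of a nonreps] by (auto simp: set_nonreps)

lemma card_plus_length_nonreps: "K + length nonreps = m"
proof -
  have "{i. i < m \<and> rep (c i) = i} = rep ` {..<K}"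
  proof (intro equalityI subsetI)
    fix i
    assume "i \<in> {i. i < m \<and> rep (c i) = i}"
    then show "i \<in> rep ` {..<K}"
      using class_less by (metis (mono_tags) image_eqI lessThan_iff mem_Collect_eq)
  qed (auto simp: rep_less class_rep)
  moreover have "inj_on rep {..<K}"
    by (rule inj_on_inverseI[where g = c]) (simp add: class_rep)
  ultimately have "card {i. i < m \<and> rep (c i) = i} = K"
    by (simp add: card_image)
  moreover have "length nonreps = card {i. i < m \<and> rep (c i) \<noteq> i}"
    using distinct_card[OF distinct_nonreps] by (simp add: set_nonreps)
  moreover have "card {i. i < m \<and> rep (c i) = i} + card {i. i < m \<and> rep (c i) \<noteq> i} = m"
    by (subst card_Un_disjoint[symmetric]) (auto intro: arg_cong[where f = card, of _ "{..<m}", simplified])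
  ultimately show ?thesis
    by simp
qed

lemma carrier_mats:
  "blowup_mat \<in> carrier_mat m m" "basis_mat \<in> carrier_mat m m" "quotient_mat \<in> carrier_mat K K"
  by (simp_all add: blowup_mat_def basis_mat_def quotient_mat_def)

lemma block_mat_carrier: "block_mat \<in> carrier_mat m m"
proof -
  have "block_mat \<in> carrier_mat (K + length nonreps) (K + length nonreps)"
    unfolding block_mat_def by (intro four_block_carrier_mat) (simp_all add: quotient_mat_def)
  then show ?thesis
    by (simp only: card_plus_length_nonreps)
qed

lemma block_mat_class_col:
  assumes "l < m" "s < K"
  shows "block_mat $$ (l, s) = (if l < K then quotient_mat $$ (l, s) else 0)"
  using assms card_plus_length_nonreps carrier_mats(3) by (auto simp: block_mat_def mat_diag_def)

lemma block_mat_nonrep_col: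
  assumes "l < m" "a < length nonreps"
  shows "block_mat $$ (l, K + a) =
    (if l < K then (if A l (c (nonreps ! a)) then -1 else 0)
     else if l = K + a then N (c (nonreps ! a)) else 0)"
  using assms card_plus_length_nonreps carrier_mats(3) by (auto simp: block_mat_def mat_diag_def)

lemma blowup_mat_mult_basis_mat_class_col:
  assumes i: "i < m" and s: "s < K"
  shows "(blowup_mat * basis_mat) $$ (i, s) = quotient_mat $$ (c i, s)"
proof -
  let ?fibre = "{l \<in> {..<m}. c l = s}"
  have "(blowup_mat * basis_mat) $$ (i, s) = (\<Sum>l<m. blowup_mat $$ (i, l) * basis_mat $$ (l, s))"
    using i s card_plus_length_nonreps carrier_mats by (subst index_mult_mat_sum) auto
  also have "\<dots> = (\<Sum>l<m. if c l = s then blowup_mat $$ (i, l) else 0)"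
    using s card_plus_length_nonreps by (intro sum.cong) (simp_all add: basis_mat_def)
  also have "\<dots> = (\<Sum>l\<in>?fibre. blowup_mat $$ (i, l))"
    by (rule sum.inter_filter[symmetric]) simp
  also have "\<dots> = quotient_mat $$ (c i, s)"
  proof (cases "c i = s")
    case True
    then have "(\<Sum>l\<in>?fibre. blowup_mat $$ (i, l)) = (\<Sum>l\<in>?fibre. if l = i then N s else 0)"
      using i class_adj_irrefl[OF s] by (intro sum.cong) (auto simp: blowup_mat_def)
    then show ?thesis
      using True i s by (simp add: quotient_mat_def)
  next
    case False
    then have "(\<Sum>l\<in>?fibre. blowup_mat $$ (i, l)) = (\<Sum>l\<in>?fibre. if A (c i) s then -1 else 0)"
      using i by (intro sum.cong) (auto simp: blowup_mat_def)
    then show ?thesis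
      using False s class_less[OF i] by (simp add: quotient_mat_def fibre_card_def)
  qed
  finally show ?thesis .
qed

lemma blowup_mat_mult_basis_mat_nonrep_col:
  assumes i: "i < m" and a: "a < length nonreps"
  shows "(blowup_mat * basis_mat) $$ (i, K + a) = blowup_mat $$ (i, nonreps ! a)"
proof -
  have "(blowup_mat * basis_mat) $$ (i, K + a) =
      (\<Sum>l<m. blowup_mat $$ (i, l) * basis_mat $$ (l, K + a))"
    using i a card_plus_length_nonreps carrier_mats by (subst index_mult_mat_sum) auto
  also have "\<dots> = (\<Sum>l<m. if l = nonreps ! a then blowup_mat $$ (i, nonreps ! a) else 0)"
    using a card_plus_length_nonreps by (intro sum.cong) (auto simp: basis_mat_def)
  also have "\<dots> = blowup_mat $$ (i, nonreps ! a)"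
    using nonreps_nth_less[OF a] by simp
  finally show ?thesis .
qed

lemma basis_mat_mult_block_mat_class_col:
  assumes i: "i < m" and s: "s < K"
  shows "(basis_mat * block_mat) $$ (i, s) = quotient_mat $$ (c i, s)"
proof -
  have "(basis_mat * block_mat) $$ (i, s) = (\<Sum>l<m. basis_mat $$ (i, l) * block_mat $$ (l, s))"
    using i s card_plus_length_nonreps carrier_mats block_mat_carrier
    by (subst index_mult_mat_sum) auto
  also have "\<dots> = (\<Sum>l<m. if l = c i then quotient_mat $$ (c i, s) else 0)"
    using i s class_less[OF i] by (intro sum.cong) (auto simp: basis_mat_def block_mat_class_col)
  also have "\<dots> = quotient_mat $$ (c i, s)"
    using class_less[OF i] card_plus_length_nonreps by simp
  finally show ?thesis .
qed

lemma basis_mat_mult_block_mat_nonrep_col: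
  assumes i: "i < m" and a: "a < length nonreps"
  shows "(basis_mat * block_mat) $$ (i, K + a) =
    (if A (c i) (c (nonreps ! a)) then -1 else 0) + (if i = nonreps ! a then N (c (nonreps ! a)) else 0)"
proof -
  let ?v = "nonreps ! a"
  have "(basis_mat * block_mat) $$ (i, K + a) = (\<Sum>l<m. basis_mat $$ (i, l) * block_mat $$ (l, K + a))"
    using i a card_plus_length_nonreps carrier_mats block_mat_carrier
    by (subst index_mult_mat_sum) auto
  also have "\<dots> = (\<Sum>l<m. (if l = c i then (if A (c i) (c ?v) then -1 else 0) else 0)
      + (if l = K + a then (if i = ?v then N (c ?v) else 0) else 0))"
    using i a class_less[OF i] by (intro sum.cong) (auto simp: basis_mat_def block_mat_nonrep_col)
  also have "\<dots> = (if A (c i) (c ?v) then -1 else 0) + (if i = ?v then N (c ?v) else 0)"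
    using a class_less[OF i] card_plus_length_nonreps by (simp add: sum.distrib)
  finally show ?thesis .
qed

lemma blowup_mat_mult_basis_mat: "blowup_mat * basis_mat = basis_mat * block_mat"
proof (rule eq_matI)
  fix i j
  assume "i < dim_row (basis_mat * block_mat)" "j < dim_col (basis_mat * block_mat)"
  then have i: "i < m" and j: "j < m"
    using carrier_mats block_mat_carrier by auto
  show "(blowup_mat * basis_mat) $$ (i, j) = (basis_mat * block_mat) $$ (i, j)"
  proof (cases "j < K")
    case False
    then obtain a where a: "a < length nonreps" and j_eq: "j = K + a"
      using j card_plus_length_nonreps by (metis add_less_cancel_left le_add_diff_inverse not_less)
    have "blowup_mat $$ (i, nonreps ! a) = (if A (c i) (c (nonreps ! a)) then -1 else 0)
        + (if i = nonreps ! a then N (c (nonreps ! a)) else 0)"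
      using i nonreps_nth_less[OF a] class_adj_irrefl[OF class_less[OF i]] by (auto simp: blowup_mat_def)
    then show ?thesis
      using i a j_eq
      by (simp only: blowup_mat_mult_basis_mat_nonrep_col basis_mat_mult_block_mat_nonrep_col)
  qed (simp add: i blowup_mat_mult_basis_mat_class_col basis_mat_mult_block_mat_class_col)
qed (use carrier_mats block_mat_carrier in auto)

lemma basis_mat_mult_vec_rep:
  assumes x: "x \<in> carrier_vec m" and s: "s < K"
  shows "(basis_mat *\<^sub>v x) $ rep s = x $ s"
proof -
  have "(basis_mat *\<^sub>v x) $ rep s = (\<Sum>l<m. basis_mat $$ (rep s, l) * x $ l)"
    using x rep_less[OF s] carrier_mats(2) by (auto simp: scalar_prod_def intro!: sum.cong)
  also have "\<dots> = (\<Sum>l<m. if l = s then x $ s else 0)"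
  proof (intro sum.cong refl)
    fix l
    assume l: "l \<in> {..<m}"
    have "rep s \<noteq> nonreps ! (l - K)" if "\<not> l < K"
    proof -
      have "l - K < length nonreps"
        using that l card_plus_length_nonreps by auto
      then show ?thesis
        using nonreps_nth_not_rep class_rep[OF s] by metis
    qed
    then show "basis_mat $$ (rep s, l) * x $ l = (if l = s then x $ s else 0)"
      using l rep_less[OF s] class_rep[OF s] s by (auto simp: basis_mat_def)
  qed
  also have "\<dots> = x $ s"
    using s card_plus_length_nonreps by simp
  finally show ?thesis .
qed

lemma basis_mat_mult_vec_nonrep:
  assumes x: "x \<in> carrier_vec m" and a: "a < length nonreps"
  shows "(basis_mat *\<^sub>v x) $ (nonreps ! a) = x $ c (nonreps ! a) + x $ (K + a)"
proof -
  let ?i = "nonreps ! a"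
  have i: "?i < m" "c ?i < K"
    using nonreps_nth_less[OF a] class_less by auto
  have "(basis_mat *\<^sub>v x) $ ?i = (\<Sum>l<m. basis_mat $$ (?i, l) * x $ l)"
    using x i carrier_mats(2) by (auto simp: scalar_prod_def intro!: sum.cong)
  also have "\<dots> = (\<Sum>l<m. (if l = c ?i then x $ c ?i else 0) + (if l = K + a then x $ (K + a) else 0))"
  proof (intro sum.cong refl)
    fix l
    assume l: "l \<in> {..<m}"
    have "nonreps ! (l - K) = ?i \<longleftrightarrow> l = K + a" if "\<not> l < K"
      using that l a card_plus_length_nonreps nth_eq_iff_index_eq[OF distinct_nonreps] by auto
    then show "basis_mat $$ (?i, l) * x $ l =
        (if l = c ?i then x $ c ?i else 0) + (if l = K + a then x $ (K + a) else 0)"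
      using l i by (auto simp: basis_mat_def)
  qed
  also have "\<dots> = x $ c ?i + x $ (K + a)"
    using i a card_plus_length_nonreps by (simp add: sum.distrib)
  finally show ?thesis .
qed

lemma det_basis_mat_nonzero: "det basis_mat \<noteq> 0"
proof
  assume "det basis_mat = 0"
  then obtain x where x: "x \<in> carrier_vec m" "x \<noteq> 0\<^sub>v m" "basis_mat *\<^sub>v x = 0\<^sub>v m"
    using det_0_iff_vec_prod_zero[OF carrier_mats(2)] by blast
  have class_coord: "x $ s = 0" if "s < K" for s
    using basis_mat_mult_vec_rep[OF x(1) that] x(3) rep_less[OF that] by simp
  have nonrep_coord: "x $ (K + a) = 0" if "a < length nonreps" for a
    using basis_mat_mult_vec_nonrep[OF x(1) that] x(3) nonreps_nth_less[OF that]
      class_coord[OF class_less[OF nonreps_nth_less[OF that]]] by simp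
  have "x = 0\<^sub>v m"
  proof (rule eq_vecI)
    fix i
    assume "i < dim_vec (0\<^sub>v m)"
    then show "x $ i = 0\<^sub>v m $ i"
      using class_coord nonrep_coord[of "i - K"] card_plus_length_nonreps
      by (cases "i < K") auto
  qed (use x in auto)
  with x(2) show False ..
qed

lemma card_nonreps_fibre:
  assumes "s < K"
  shows "card {i \<in> set nonreps. c i = s} = fibre_card s - 1"
proof -
  have "{i \<in> set nonreps. c i = s} = {i. i < m \<and> c i = s} - {rep s}"
    using class_rep[OF assms] by (auto simp: set_nonreps)
  then show ?thesis
    using rep_less[OF assms] class_rep[OF assms] by (simp add: fibre_card_def)
qed

lemma proots_char_poly_blowup_mat:
  "proots (char_poly blowup_mat) =
    proots (char_poly quotient_mat) + (\<Sum>s<K. replicate_mset (fibre_card s - 1) (N s))"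
proof -
  let ?D = "mat_diag (length nonreps) (\<lambda>a. N (c (nonreps ! a)))"
  have "similar_mat blowup_mat block_mat"
    using carrier_mats block_mat_carrier det_basis_mat_nonzero blowup_mat_mult_basis_mat
    by (intro similar_mat_if_intertwined[of _ m]) auto
  then have "char_poly blowup_mat = char_poly block_mat"
    by (rule char_poly_similar)
  also have "\<dots> = char_poly quotient_mat * char_poly ?D"
    unfolding block_mat_def using carrier_mats(3) by (intro char_poly_four_block_zero) auto
  finally have blocks: "proots (char_poly blowup_mat) = proots (char_poly quotient_mat) + proots (char_poly ?D)"
    by (simp only: proots_mult[OF char_poly_nonzero[OF carrier_mats(3)] char_poly_nonzero[OF mat_diag_dim]])
  have "map (\<lambda>a. N (c (nonreps ! a))) [0..<length nonreps] = map (\<lambda>i. N (c i)) nonreps"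
    by (rule nth_equalityI) simp_all
  then have "proots (char_poly ?D) = image_mset (\<lambda>i. N (c i)) (mset_set (set nonreps))"
    by (simp add: proots_char_poly_mat_diag mset_set_set[OF distinct_nonreps])
  also have "\<dots> = (\<Sum>s<K. replicate_mset (card {i \<in> set nonreps. c i = s}) (N s))"
    using class_less by (intro image_mset_mset_set_fibres) (auto simp: set_nonreps)
  also have "\<dots> = (\<Sum>s<K. replicate_mset (fibre_card s - 1) (N s))"
    by (simp add: card_nonreps_fibre)
  finally show ?thesis
    using blocks by simp
qed

end

lemma card_filter_bij_betw:
  assumes "bij_betw h A B"
  shows "card {a \<in> A. P (h a)} = card {b \<in> B. P b}"
proof (rule bij_betw_same_card)
  show "bij_betw h {a \<in> A. P (h a)} {b \<in> B. P b}"
    using assms by (auto simp: bij_betw_def inj_on_def image_iff)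
qed

lemma card_filter_eq_sum_fibres:
  assumes "finite V" "f ` V = W"
  shows "card {v \<in> V. P (f v)} = (\<Sum>w\<in>{w \<in> W. P w}. card {v \<in> V. f v = w})"
proof -
  have "card {v \<in> V. P (f v)} = (\<Sum>w\<in>{w \<in> W. P w}. card {v \<in> {v \<in> V. P (f v)}. f v = w})"
    unfolding card_eq_sum using assms by (intro sum.group[symmetric]) auto
  also have "\<dots> = (\<Sum>w\<in>{w \<in> W. P w}. card {v \<in> V. f v = w})"
    by (intro sum.cong refl, rule arg_cong[where f = card]) auto
  finally show ?thesis .
qed

lemma set_mat_cong:
  assumes "\<And>i j. i \<in> V \<Longrightarrow> j \<in> V \<Longrightarrow> f i j = g i j"
  shows "set_mat V f = set_mat V g"
proof (cases "finite V")
  case True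
  then have "sorted_list_of_set V ! i \<in> V" if "i < card V" for i
    using that nth_mem[of i "sorted_list_of_set V"] by simp
  then show ?thesis
    unfolding set_mat_def using assms by (intro cong_mat) auto
next
  case False
  then show ?thesis
    unfolding set_mat_def by (intro cong_mat) simp_all
qed

definition set_index :: "nat set \<Rightarrow> nat \<Rightarrow> nat" where
  "set_index W x = the_inv_into {..<card W} ((!) (sorted_list_of_set W)) x"

lemma bij_betw_nth_sorted_list_of_set:
  "finite W \<Longrightarrow> bij_betw ((!) (sorted_list_of_set W)) {..<card W} W"
  by (intro bij_betw_nth) simp_all

lemma set_index_less: "finite W \<Longrightarrow> x \<in> W \<Longrightarrow> set_index W x < card W"
  unfolding set_index_def
  using bij_betw_apply[OF bij_betw_the_inv_into[OF bij_betw_nth_sorted_list_of_set]] by auto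

lemma nth_set_index: "finite W \<Longrightarrow> x \<in> W \<Longrightarrow> sorted_list_of_set W ! set_index W x = x"
  unfolding set_index_def by (rule f_the_inv_into_f_bij_betw[OF bij_betw_nth_sorted_list_of_set])

lemma set_index_nth: "finite W \<Longrightarrow> s < card W \<Longrightarrow> set_index W (sorted_list_of_set W ! s) = s"
  unfolding set_index_def
  using bij_betw_nth_sorted_list_of_set by (intro the_inv_into_f_f) (auto simp: bij_betw_def)

lemma set_index_eq_iff:
  "finite W \<Longrightarrow> x \<in> W \<Longrightarrow> s < card W \<Longrightarrow>
    set_index W x = s \<longleftrightarrow> x = sorted_list_of_set W ! s"
  using nth_set_index set_index_nth by metis

lemma class_blowup_sorted_list_of_set:
  fixes V W :: "nat set" and cls :: "nat \<Rightarrow> nat" and adj :: "nat \<Rightarrow> nat \<Rightarrow> bool"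
  assumes V: "finite V" and W: "cls ` V = W" and irrefl: "\<And>s. s \<in> W \<Longrightarrow> \<not> adj s s"
  shows "class_blowup (card V) (card W) (\<lambda>i. set_index W (cls (sorted_list_of_set V ! i)))
    (\<lambda>s t. adj (sorted_list_of_set W ! s) (sorted_list_of_set W ! t))"
proof
  have "finite W"
    using V W by blast
  show "set_index W (cls (sorted_list_of_set V ! i)) < card W" if "i < card V" for i
  proof -
    have "sorted_list_of_set V ! i \<in> V"
      using that V by (metis length_sorted_list_of_set nth_mem set_sorted_list_of_set)
    then show ?thesis
      using set_index_less[OF \<open>finite W\<close>] W by blast
  qed
  fix s
  assume s: "s < card W"
  then have ws: "sorted_list_of_set W ! s \<in> W"
    using \<open>finite W\<close> by (metis length_sorted_list_of_set nth_mem set_sorted_list_of_set)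
  then obtain v where v: "v \<in> V" "cls v = sorted_list_of_set W ! s"
    using W by auto
  then have "set_index W (cls (sorted_list_of_set V ! set_index V v)) = s"
    using V \<open>finite W\<close> s by (simp add: nth_set_index set_index_nth)
  then show "\<exists>i<card V. set_index W (cls (sorted_list_of_set V ! i)) = s"
    using set_index_less[OF V v(1)] by blast
  show "\<not> adj (sorted_list_of_set W ! s) (sorted_list_of_set W ! s)"
    using irrefl[OF ws] .
qed

lemma proots_char_poly_set_mat_blowup:
  fixes V W :: "nat set" and cls :: "nat \<Rightarrow> nat" and adj :: "nat \<Rightarrow> nat \<Rightarrow> bool"
    and N :: "nat \<Rightarrow> 'a :: field"
  assumes V: "finite V" and W: "cls ` V = W" and irrefl: "\<And>s. s \<in> W \<Longrightarrow> \<not> adj s s"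
  shows "proots (char_poly (set_mat V (\<lambda>i j. if i = j then N (cls i)
                                    else if adj (cls i) (cls j) then -1 else 0))) =
    proots (char_poly (set_mat W (\<lambda>s t. if s = t then N s
                        else if adj s t then - of_nat (card {i \<in> V. cls i = t}) else 0)))
    + (\<Sum>s\<in>W. replicate_mset (card {i \<in> V. cls i = s} - 1) (N s))"
proof -
  define vs where "vs = sorted_list_of_set V"
  define ws where "ws = sorted_list_of_set W"
  define c where "c i = set_index W (cls (vs ! i))" for i
  interpret class_blowup "card V" "card W" c "\<lambda>s t. adj (ws ! s) (ws ! t)" "\<lambda>s. N (ws ! s)"
    unfolding c_def vs_def ws_def by (rule class_blowup_sorted_list_of_set[OF V W irrefl])
  have "finite W"
    using V W by blast
  have vs: "distinct vs" "length vs = card V" "bij_betw ((!) vs) {..<card V} V"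
    and ws: "distinct ws" "length ws = card W" "bij_betw ((!) ws) {..<card W} W"
    using V \<open>finite W\<close> by (simp_all add: vs_def ws_def bij_betw_nth_sorted_list_of_set)
  have cls_mem: "cls (vs ! i) \<in> W" if "i < card V" for i
    using that vs(3) W by (auto dest: bij_betw_apply)
  have ws_c: "ws ! c i = cls (vs ! i)" if "i < card V" for i
    using nth_set_index[OF \<open>finite W\<close> cls_mem[OF that]] by (simp add: c_def ws_def)
  have fibre: "fibre_card t = card {i \<in> V. cls i = ws ! t}" if "t < card W" for t
  proof -
    have "c i = t \<longleftrightarrow> cls (vs ! i) = ws ! t" if "i < card V" for i
      using set_index_eq_iff[OF \<open>finite W\<close> cls_mem[OF that] \<open>t < card W\<close>]
      by (simp add: c_def ws_def)
    then have "{i. i < card V \<and> c i = t} = {i \<in> {..<card V}. cls (vs ! i) = ws ! t}"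
      by auto
    then show ?thesis
      unfolding fibre_card_def using card_filter_bij_betw[OF vs(3)] by simp
  qed
  have "set_mat V (\<lambda>i j. if i = j then N (cls i) else if adj (cls i) (cls j) then -1 else 0) = blowup_mat"
    unfolding set_mat_def blowup_mat_def vs_def[symmetric]
    using vs ws_c nth_eq_iff_index_eq[OF vs(1)] by (intro cong_mat) auto
  moreover have "set_mat W (\<lambda>s t. if s = t then N s
        else if adj s t then - of_nat (card {i \<in> V. cls i = t}) else 0) = quotient_mat"
    unfolding set_mat_def quotient_mat_def ws_def[symmetric]
    using ws fibre nth_eq_iff_index_eq[OF ws(1)] by (intro cong_mat) auto
  moreover have "(\<Sum>s\<in>W. replicate_mset (card {i \<in> V. cls i = s} - 1) (N s)) =
      (\<Sum>s<card W. replicate_mset (fibre_card s - 1) (N (ws ! s)))"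
    using fibre by (simp add: sum.reindex_bij_betw[OF ws(3), symmetric])
  ultimately show ?thesis
    using proots_char_poly_blowup_mat by simp
qed

definition weighted_degree ::
    "nat set \<Rightarrow> (nat \<Rightarrow> nat \<Rightarrow> bool) \<Rightarrow> (nat \<Rightarrow> nat) \<Rightarrow> nat \<Rightarrow> nat" where
  "weighted_degree W adj wt s = (\<Sum>t\<in>{t \<in> W. adj s t}. wt t)"

definition weighted_laplacian ::
    "nat set \<Rightarrow> (nat \<Rightarrow> nat \<Rightarrow> bool) \<Rightarrow> (nat \<Rightarrow> nat) \<Rightarrow> complex mat" where
  "weighted_laplacian W adj wt = set_mat W (\<lambda>s t.
      if s = t then of_nat (weighted_degree W adj wt s)
      else if adj s t then - of_nat (wt t) else 0)"

lemma spectrum_laplacian_blowup: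
  fixes V W :: "nat set" and cls :: "nat \<Rightarrow> nat" and adj :: "nat \<Rightarrow> nat \<Rightarrow> bool"
    and wt :: "nat \<Rightarrow> nat"
  assumes V: "finite V" and W: "cls ` V = W" and irrefl: "\<And>s. s \<in> W \<Longrightarrow> \<not> adj s s"
    and wt: "\<And>s. s \<in> W \<Longrightarrow> wt s = card {i \<in> V. cls i = s}"
  shows "spectrum_mset (laplacian V (\<lambda>i j. adj (cls i) (cls j))) =
    spectrum_mset (weighted_laplacian W adj wt)
    + (\<Sum>s\<in>W. replicate_mset (wt s - 1) (of_nat (weighted_degree W adj wt s)))"
proof -
  let ?deg = "\<lambda>s. (of_nat (weighted_degree W adj wt s) :: complex)"
  have "card {k \<in> V. adj (cls i) (cls k)} = weighted_degree W adj wt (cls i)" for i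
    unfolding card_filter_eq_sum_fibres[OF V W] weighted_degree_def by (intro sum.cong) (auto simp: wt)
  then have "laplacian V (\<lambda>i j. adj (cls i) (cls j)) =
      set_mat V (\<lambda>i j. if i = j then ?deg (cls i) else if adj (cls i) (cls j) then -1 else 0)"
    unfolding laplacian_def by (intro set_mat_cong) simp
  moreover have "weighted_laplacian W adj wt = set_mat W (\<lambda>s t. if s = t then ?deg s
      else if adj s t then - of_nat (card {i \<in> V. cls i = t}) else 0)"
    unfolding weighted_laplacian_def by (intro set_mat_cong) (simp add: wt)
  ultimately show ?thesis
    unfolding spectrum_mset_def
    using proots_char_poly_set_mat_blowup[where adj = adj and N = ?deg, OF V W irrefl]
    by (simp add: wt)
qed

section \<open>Ideals of Z_n through exponent vectors\<close>

definition unitary_divisor :: "nat \<Rightarrow> nat set \<Rightarrow> nat" where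
  "unitary_divisor n S = (\<Prod>p\<in>S. p ^ multiplicity p n)"

lemma divisor_eqI_multiplicity:
  fixes n d e :: nat
  assumes n: "n > 0" and d: "d dvd n" and e: "e dvd n"
    and eq: "\<And>p. p \<in> prime_factors n \<Longrightarrow> multiplicity p d = multiplicity p e"
  shows "d = e"
proof (rule multiplicity_eq_nat)
  show "d > 0" "e > 0"
    using n d e by (auto intro: dvd_pos_nat)
  fix p :: nat
  assume p: "prime p"
  show "multiplicity p d = multiplicity p e"
  proof (cases "p \<in> prime_factors n")
    case False
    then have "multiplicity p n = 0"
      using p by (simp add: prime_factors_multiplicity)
    then show ?thesis
      using dvd_imp_multiplicity_le[OF d, of p] dvd_imp_multiplicity_le[OF e, of p] n by simp
  qed (rule eq)
qed

lemma lcm_eq_iff_multiplicity: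
  fixes n d e :: nat
  assumes n: "n > 0" and d: "d dvd n" and e: "e dvd n"
  shows "lcm d e = n \<longleftrightarrow>
    (\<forall>p\<in>prime_factors n. max (multiplicity p d) (multiplicity p e) = multiplicity p n)"
proof -
  have "d \<noteq> 0" "e \<noteq> 0"
    using n d e by auto
  then have lcm: "multiplicity p (lcm d e) = max (multiplicity p d) (multiplicity p e)"
    if "p \<in> prime_factors n" for p
    using that by (intro multiplicity_lcm) auto
  show ?thesis
  proof
    assume max_eq: "\<forall>p\<in>prime_factors n. max (multiplicity p d) (multiplicity p e) = multiplicity p n"
    show "lcm d e = n"
    proof (rule divisor_eqI_multiplicity[OF n])
      show "lcm d e dvd n" "n dvd n"
        using d e by simp_all
      fix p
      assume "p \<in> prime_factors n"
      then show "multiplicity p (lcm d e) = multiplicity p n"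
        using lcm[of p] max_eq by simp
    qed
  next
    assume lcm_eq: "lcm d e = n"
    show "\<forall>p\<in>prime_factors n. max (multiplicity p d) (multiplicity p e) = multiplicity p n"
    proof
      fix p
      assume "p \<in> prime_factors n"
      then show "max (multiplicity p d) (multiplicity p e) = multiplicity p n"
        using lcm[of p] by (simp only: lcm_eq)
    qed
  qed
qed

lemma multiplicity_prod_prime_factors:
  fixes n q :: nat
  assumes "prime q"
  shows "multiplicity q (\<Prod>p\<in>prime_factors n. p ^ f p) = (if q \<in> prime_factors n then f q else 0)"
  using assms by (intro multiplicity_prod_prime_powers) auto

lemma prod_prime_factors_pos: "(\<Prod>p\<in>prime_factors (n :: nat). p ^ f p) > 0"
  by (intro prod_pos) (auto intro: prime_gt_0_nat)

lemma prod_prime_factors_multiplicity_divisor: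
  fixes n d :: nat
  assumes n: "n > 0" and d: "d dvd n"
  shows "(\<Prod>p\<in>prime_factors n. p ^ multiplicity p d) = d"
proof (rule multiplicity_eq_nat)
  show "d > 0"
    using n d by (auto intro: dvd_pos_nat)
  fix q :: nat
  assume q: "prime q"
  have "multiplicity q d = 0" if "q \<notin> prime_factors n"
    using that q dvd_imp_multiplicity_le[OF d, of q] n by (auto simp: prime_factors_multiplicity)
  then show "multiplicity q (\<Prod>p\<in>prime_factors n. p ^ multiplicity p d) = multiplicity q d"
    using q by (simp add: multiplicity_prod_prime_factors)
qed (rule prod_prime_factors_pos)

lemma bij_betw_divisors_exponents:
  fixes n :: nat
  assumes n: "n > 0"
  shows "bij_betw (\<lambda>d. restrict (\<lambda>p. multiplicity p d) (prime_factors n)) {d. d dvd n}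
    (\<Pi>\<^sub>E p\<in>prime_factors n. {..multiplicity p n})"
proof (rule bij_betw_byWitness[where f' = "\<lambda>f. \<Prod>p\<in>prime_factors n. p ^ f p"])
  show "\<forall>d\<in>{d. d dvd n}.
      (\<Prod>p\<in>prime_factors n. p ^ restrict (\<lambda>p. multiplicity p d) (prime_factors n) p) = d"
    using prod_prime_factors_multiplicity_divisor[OF n] by simp
  show "\<forall>f\<in>\<Pi>\<^sub>E p\<in>prime_factors n. {..multiplicity p n}.
      restrict (\<lambda>p. multiplicity p (\<Prod>p\<in>prime_factors n. p ^ f p)) (prime_factors n) = f"
  proof
    fix f
    assume f: "f \<in> (\<Pi>\<^sub>E p\<in>prime_factors n. {..multiplicity p n})"
    show "restrict (\<lambda>p. multiplicity p (\<Prod>p\<in>prime_factors n. p ^ f p)) (prime_factors n) = f"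
    proof
      fix q
      show "restrict (\<lambda>p. multiplicity p (\<Prod>p\<in>prime_factors n. p ^ f p)) (prime_factors n) q = f q"
      proof (cases "q \<in> prime_factors n")
        case True
        then have "prime q"
          by auto
        with True show ?thesis
          by (simp add: multiplicity_prod_prime_factors)
      next
        case False
        then show ?thesis
          using PiE_arb[OF f False] by simp
      qed
    qed
  qed
  show "(\<lambda>d. restrict (\<lambda>p. multiplicity p d) (prime_factors n)) ` {d. d dvd n}
      \<subseteq> (\<Pi>\<^sub>E p\<in>prime_factors n. {..multiplicity p n})"
    using n by (auto intro: dvd_imp_multiplicity_le)
  show "(\<lambda>f. \<Prod>p\<in>prime_factors n. p ^ f p) ` (\<Pi>\<^sub>E p\<in>prime_factors n. {..multiplicity p n})
      \<subseteq> {d. d dvd n}"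
    using prod_prime_factors_pos multiplicity_prod_prime_factors
    by (auto intro!: multiplicity_le_imp_dvd simp: PiE_iff)
qed

lemma multiplicity_unitary_divisor:
  assumes "S \<subseteq> prime_factors n" "prime p"
  shows "multiplicity p (unitary_divisor n S) = (if p \<in> S then multiplicity p n else 0)"
  unfolding unitary_divisor_def using assms
  by (intro multiplicity_prod_prime_powers) (auto intro: finite_subset)

lemma unitary_divisor_dvd:
  assumes "n > 0" "S \<subseteq> prime_factors n"
  shows "unitary_divisor n S dvd n"
proof (rule multiplicity_le_imp_dvd)
  show "unitary_divisor n S \<noteq> 0"
    using assms(2) finite_subset[OF assms(2)] by (auto simp: unitary_divisor_def)
  show "multiplicity p (unitary_divisor n S) \<le> multiplicity p n" if "prime p" for p
    using multiplicity_unitary_divisor[OF assms(2) that] by simp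
qed

lemma Xi_subset: "Xi n d \<subseteq> prime_factors n"
  by (auto simp: Xi_def)

lemma Xi_unitary_divisor:
  assumes "S \<subseteq> prime_factors n"
  shows "Xi n (unitary_divisor n S) = S"
  using assms multiplicity_unitary_divisor[OF assms]
  by (auto simp: Xi_def prime_factors_multiplicity split: if_splits)

lemma Xi_one: "Xi n 1 = {}"
  by (auto simp: Xi_def prime_factors_multiplicity)

lemma Xi_self: "Xi n n = prime_factors n"
  by (simp add: Xi_def)

lemma Xi_eq_prime_factors_iff:
  assumes "n > 0" "d dvd n"
  shows "Xi n d = prime_factors n \<longleftrightarrow> d = n"
proof
  assume "Xi n d = prime_factors n"
  then show "d = n"
    by (intro divisor_eqI_multiplicity[OF assms]) (auto simp: Xi_def)
qed (simp add: Xi_self)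

lemma Xi_gcd:
  assumes n: "n > 0" and d: "d dvd n" and e: "e dvd n"
  shows "Xi n (gcd d e) = Xi n d \<inter> Xi n e"
proof -
  have "d \<noteq> 0" "e \<noteq> 0"
    using n d e by auto
  then have gcd: "multiplicity p (gcd d e) = min (multiplicity p d) (multiplicity p e)"
    if "p \<in> prime_factors n" for p
    using that by (auto intro: multiplicity_gcd)
  have "p \<in> Xi n (gcd d e) \<longleftrightarrow> p \<in> Xi n d \<inter> Xi n e" for p
    using gcd[of p] dvd_imp_multiplicity_le[OF d, of p] dvd_imp_multiplicity_le[OF e, of p] n
    by (auto simp: Xi_def min_def split: if_splits)
  then show ?thesis
    by blast
qed

lemma lcm_unitary_divisor_remove:
  assumes n: "n > 0" and d: "d dvd n" and p: "p \<in> Xi n d"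
  shows "lcm d (unitary_divisor n (prime_factors n - {p})) = n"
proof -
  let ?e = "unitary_divisor n (prime_factors n - {p})"
  have e_mult: "multiplicity q ?e = (if q = p then 0 else multiplicity q n)"
    if "q \<in> prime_factors n" for q
    using that by (subst multiplicity_unitary_divisor) auto
  have p_mult: "multiplicity p d = multiplicity p n"
    using p by (simp add: Xi_def)
  have "\<forall>q\<in>prime_factors n. max (multiplicity q d) (multiplicity q ?e) = multiplicity q n"
  proof
    fix q
    assume q: "q \<in> prime_factors n"
    show "max (multiplicity q d) (multiplicity q ?e) = multiplicity q n"
      using e_mult[OF q] p_mult dvd_imp_multiplicity_le[OF d, of q] n by (cases "q = p") simp_all
  qed
  then show ?thesis
    using lcm_eq_iff_multiplicity[OF n d unitary_divisor_dvd[OF n]] by blast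
qed

lemma essential_ideal_iff_Xi_empty:
  assumes n: "n > 0" and d: "d dvd n"
  shows "essential_ideal n d \<longleftrightarrow> Xi n d = {}"
proof
  assume ess: "essential_ideal n d"
  show "Xi n d = {}"
  proof (rule ccontr)
    assume "Xi n d \<noteq> {}"
    then obtain p where p: "p \<in> Xi n d"
      by blast
    let ?e = "unitary_divisor n (prime_factors n - {p})"
    have "Xi n ?e = prime_factors n - {p}"
      by (rule Xi_unitary_divisor) auto
    moreover have "p \<in> prime_factors n"
      using p Xi_subset[of n d] by blast
    ultimately have "?e \<noteq> n"
      using Xi_self[of n] by auto
    then show False
      using ess unitary_divisor_dvd[OF n] lcm_unitary_divisor_remove[OF n d p]
      by (auto simp: essential_ideal_def)
  qed
next
  assume Xi: "Xi n d = {}"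
  show "essential_ideal n d"
    unfolding essential_ideal_def
  proof (intro allI impI notI)
    fix e
    assume e: "e dvd n \<and> e \<noteq> n" and lcm: "lcm d e = n"
    have "e = n"
    proof (rule divisor_eqI_multiplicity[OF n])
      show "e dvd n" "n dvd n"
        using e by simp_all
      fix p
      assume p: "p \<in> prime_factors n"
      have "max (multiplicity p d) (multiplicity p e) = multiplicity p n"
        using p lcm lcm_eq_iff_multiplicity[OF n d] e by blast
      moreover have "multiplicity p d \<noteq> multiplicity p n"
        using Xi p by (auto simp: Xi_def)
      ultimately show "multiplicity p e = multiplicity p n"
        by (simp add: max_def split: if_splits)
    qed
    with e show False
      by simp
  qed
qed

lemma noness_ideals_iff:
  assumes n: "n > 0"
  shows "d \<in> noness_ideals n \<longleftrightarrow> d dvd n \<and> Xi n d \<noteq> {} \<and> Xi n d \<noteq> prime_factors n"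
  using essential_ideal_iff_Xi_empty[OF n] Xi_eq_prime_factors_iff[OF n] Xi_one
  by (auto simp: noness_ideals_def nzp_ideals_def)

lemma G_vertices_eq_image:
  "G_vertices n = unitary_divisor n ` {S. S \<subseteq> prime_factors n \<and> S \<noteq> {} \<and> S \<noteq> prime_factors n}"
  unfolding G_vertices_def unitary_divisor_def by blast

lemma finite_G_vertices: "finite (G_vertices n)"
  by (simp add: G_vertices_eq_image)

lemma Xi_G_vertex:
  assumes "g \<in> G_vertices n"
  shows "Xi n g \<noteq> {}" "Xi n g \<noteq> prime_factors n" "unitary_divisor n (Xi n g) = g"
  using assms Xi_unitary_divisor by (auto simp: G_vertices_eq_image)

lemma G_vertices_subset_noness_ideals:
  assumes "n > 0"
  shows "G_vertices n \<subseteq> noness_ideals n"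
  using assms Xi_G_vertex unitary_divisor_dvd[OF assms Xi_subset]
  by (metis noness_ideals_iff subsetI)

lemma unitary_divisor_Xi_image:
  assumes n: "n > 0"
  shows "(\<lambda>d. unitary_divisor n (Xi n d)) ` noness_ideals n = G_vertices n"
proof
  show "(\<lambda>d. unitary_divisor n (Xi n d)) ` noness_ideals n \<subseteq> G_vertices n"
    using Xi_subset by (auto simp: G_vertices_eq_image noness_ideals_iff[OF n])
  show "G_vertices n \<subseteq> (\<lambda>d. unitary_divisor n (Xi n d)) ` noness_ideals n"
  proof
    fix g
    assume g: "g \<in> G_vertices n"
    then have "g \<in> noness_ideals n"
      using G_vertices_subset_noness_ideals[OF n] by blast
    then show "g \<in> (\<lambda>d. unitary_divisor n (Xi n d)) ` noness_ideals n"
      using Xi_G_vertex(3)[OF g] by (metis image_eqI)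
  qed
qed

lemma ess_adj_iff_G_adj:
  assumes n: "n > 0" and d: "d \<in> noness_ideals n" and e: "e \<in> noness_ideals n"
  shows "ess_adj n d e \<longleftrightarrow> G_adj n (unitary_divisor n (Xi n d)) (unitary_divisor n (Xi n e))"
proof -
  have "d dvd n" "e dvd n" "Xi n d \<noteq> {}"
    using d e by (simp_all add: noness_ideals_iff[OF n])
  moreover have "gcd d e dvd n"
    using \<open>d dvd n\<close> by (meson dvd_trans gcd_dvd1)
  ultimately have "ess_adj n d e \<longleftrightarrow> Xi n d \<inter> Xi n e = {}"
    using essential_ideal_iff_Xi_empty[OF n, of "gcd d e"] Xi_gcd[OF n] by (auto simp: ess_adj_def)
  then show ?thesis
    by (simp add: G_adj_def Xi_unitary_divisor[OF Xi_subset])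
qed

lemma class_size_eq_card_fibre:
  assumes n: "n > 0" and g: "g \<in> G_vertices n"
  shows "class_size n g = card {d \<in> noness_ideals n. unitary_divisor n (Xi n d) = g}"
proof -
  have "unitary_divisor n (Xi n d) = g \<longleftrightarrow> Xi n d = Xi n g" for d
    using Xi_G_vertex(3)[OF g] Xi_unitary_divisor[OF Xi_subset, of n d] by metis
  then show ?thesis
    by (simp add: class_size_def ideal_class_def)
qed

lemma card_divisors_with_Xi:
  assumes n: "n > 0" and S: "S \<subseteq> prime_factors n"
  shows "card {d. d dvd n \<and> Xi n d = S} = (\<Prod>p\<in>prime_factors n - S. multiplicity p n)"
proof -
  let ?h = "\<lambda>d. restrict (\<lambda>p. multiplicity p d) (prime_factors n)"
  let ?box = "\<Pi>\<^sub>E p\<in>prime_factors n. {..multiplicity p n}"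
  let ?sub_box = "\<Pi>\<^sub>E p\<in>prime_factors n. if p \<in> S then {multiplicity p n} else {..<multiplicity p n}"
  have "Xi n d = {p \<in> prime_factors n. ?h d p = multiplicity p n}" for d
    by (auto simp: Xi_def)
  then have "card {d. d dvd n \<and> Xi n d = S} =
      card {d \<in> {d. d dvd n}. {p \<in> prime_factors n. ?h d p = multiplicity p n} = S}"
    by simp
  also have "\<dots> = card {f \<in> ?box. {p \<in> prime_factors n. f p = multiplicity p n} = S}"
    by (rule card_filter_bij_betw[OF bij_betw_divisors_exponents[OF n]])
  also have "{f \<in> ?box. {p \<in> prime_factors n. f p = multiplicity p n} = S} = ?sub_box"
  proof (intro equalityI subsetI)
    fix f
    assume "f \<in> {f \<in> ?box. {p \<in> prime_factors n. f p = multiplicity p n} = S}"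
    then have f: "f \<in> ?box" "{p \<in> prime_factors n. f p = multiplicity p n} = S"
      by auto
    then show "f \<in> ?sub_box"
      using S by (auto simp: PiE_iff order.order_iff_strict)
  next
    fix f
    assume f: "f \<in> ?sub_box"
    then have "{p \<in> prime_factors n. f p = multiplicity p n} = S"
      using S by (auto simp: PiE_iff split: if_splits)
    then show "f \<in> {f \<in> ?box. {p \<in> prime_factors n. f p = multiplicity p n} = S}"
      using f by (auto simp: PiE_iff split: if_splits)
  qed
  also have "card ?sub_box = (\<Prod>p\<in>prime_factors n. if p \<in> S then 1 else multiplicity p n)"
    by (simp add: card_PiE if_distrib cong: if_cong)
  also have "\<dots> = (\<Prod>p\<in>prime_factors n - S. multiplicity p n)"
    by (simp add: prod.If_cases Diff_eq)
  finally show ?thesis .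
qed

lemma class_size_eq_prod:
  assumes n: "n > 0" and g: "g \<in> G_vertices n"
  shows "class_size n g = (\<Prod>p\<in>prime_factors n - Xi n g. multiplicity p n)"
proof -
  have "ideal_class n g = {d. d dvd n \<and> Xi n d = Xi n g}"
    using Xi_G_vertex[OF g] by (auto simp: ideal_class_def noness_ideals_iff[OF n])
  then show ?thesis
    using card_divisors_with_Xi[OF n Xi_subset] by (simp add: class_size_def)
qed

lemma N_weight_eq_weighted_degree:
  "N_weight n = weighted_degree (G_vertices n) (G_adj n) (class_size n)"
  by (simp add: fun_eq_iff N_weight_def weighted_degree_def)

lemma finite_noness_ideals: "n > 0 \<Longrightarrow> finite (noness_ideals n)"
  by (rule finite_subset[of _ "{d. d dvd n}"]) (auto simp: noness_ideals_iff)

lemma laplacian_cong: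
  assumes "\<And>i j. i \<in> V \<Longrightarrow> j \<in> V \<Longrightarrow> adj i j \<longleftrightarrow> adj' i j"
  shows "laplacian V adj = laplacian V adj'"
proof -
  have "{k \<in> V. adj i k} = {k \<in> V. adj' i k}" if "i \<in> V" for i
    using assms that by auto
  then show ?thesis
    unfolding laplacian_def using assms by (intro set_mat_cong) simp
qed

theorem mainTheorem11:
  fixes n :: nat
  assumes "n > 1" and "\<not> prime n"
  shows "spectrum_mset (laplacian (noness_ideals n) (ess_adj n)) =
    (\<Sum>I\<in>{I \<in> G_vertices n. class_size n I > 1}.
        replicate_mset ((\<Prod>p\<in>prime_factors n - Xi n I. multiplicity p n) - 1)
                       (of_nat (N_weight n I)))
    + spectrum_mset (weighted_laplacian_G n)"
proof -
  have n: "n > 0"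
    using assms(1) by simp
  let ?cls = "\<lambda>d. unitary_divisor n (Xi n d)"
  let ?wdeg = "weighted_degree (G_vertices n) (G_adj n) (class_size n)"
  have "laplacian (noness_ideals n) (ess_adj n) =
      laplacian (noness_ideals n) (\<lambda>d e. G_adj n (?cls d) (?cls e))"
    by (intro laplacian_cong) (simp add: ess_adj_iff_G_adj[OF n])
  moreover have "spectrum_mset (laplacian (noness_ideals n) (\<lambda>d e. G_adj n (?cls d) (?cls e))) =
      spectrum_mset (weighted_laplacian (G_vertices n) (G_adj n) (class_size n))
      + (\<Sum>I\<in>G_vertices n. replicate_mset (class_size n I - 1) (of_nat (?wdeg I)))"
    using finite_noness_ideals[OF n] unitary_divisor_Xi_image[OF n] class_size_eq_card_fibre[OF n]
      Xi_G_vertex(1) by (intro spectrum_laplacian_blowup) (auto simp: G_adj_def)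
  moreover have "weighted_laplacian (G_vertices n) (G_adj n) (class_size n) = weighted_laplacian_G n"
    by (simp only: weighted_laplacian_def weighted_laplacian_G_def N_weight_eq_weighted_degree)
  moreover have "(\<Sum>I\<in>G_vertices n. replicate_mset (class_size n I - 1) (of_nat (?wdeg I))) =
      (\<Sum>I\<in>{I \<in> G_vertices n. class_size n I > 1}.
        replicate_mset ((\<Prod>p\<in>prime_factors n - Xi n I. multiplicity p n) - 1) (of_nat (N_weight n I)))"
    by (rule sum.mono_neutral_cong_right)
      (auto simp: finite_G_vertices class_size_eq_prod[OF n] N_weight_eq_weighted_degree)
  ultimately show ?thesis
    by (simp add: add.commute)
qed

end
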